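(* Let $t\in T_2$, let $\mathcal{T}_t$ be the variety defined by $t(x,y)=x$, let $X$ be a set, and let $A=X\mathcal{T}_t^{\,p}$ be the free $\mathcal{T}_t^{\,p}$-algebra over $X$ with semilattice replica congruence $\varrho$. Let $\theta$ be any congruence of $A$ and $\psi=\theta\vee\varrho$. Then $A/\theta$ is a semilattice sum of $\mathcal{T}_t$-algebras. More precisely, $\psi/\theta$ is the semilattice replica congruence of $A/\theta$, and every $\psi/\theta$-class $(a/\theta)/(\psi/\theta)$, $a\in A$, satisfies $t(x,y)=x$.
   Context: Standing conventions: $\Omega$-algebras are of a plural similarity type (no nullary operation symbols, at least one operation symbol of arity $\ge2$). $T_n$ is the set of $\Omega$-terms in $x_1,\dots,x_n$ in which all $n$ variables occur. An identity is regular if the same variables occur on both sides. $\mathcal{S}$ is the variety of $\Omega$-algebras satisfying all regular identities. A semilattice sum of $\mathcal{V}$-algebras is an $\Omega$-algebra $A$ with a congruence $\theta$ such that $A/\theta\in\mathcal{S}$ and each $\theta$-class (a subalgebra) is in $\mathcal{V}$. The semilattice replica congruence of $A$ is the smallest congruence $\varrho$ with $A/\varrho\in\mathcal{S}$. Prolongation: for an identity $\sigma$ of the form $u(y_1,\dots,y_n)=v(y_1,\dots,y_n)$ and $m\ge1$, $\sigma^p_m$ is the set of identities $u(r_1,\dots,r_n)=v(r_1,\dots,r_n)$ obtained by substituting $r_i(x_1,\dots,x_m)$ for $y_i$, with $r_i$ ranging over $T_m$; $\sigma^p=\bigcup_m\sigma^p_m$; $\Sigma^p=\bigcup_{\sigma\in\Sigma}\sigma^p$.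 For a variety $\mathcal{V}$, $\mathcal{V}^p$ is the variety defined by $\mathrm{Id}(\mathcal{V})^p$. *)

theory Defs
  imports Main
begin

datatype ('f, 'v) trm = Var 'v | Fun 'f "('f, 'v) trm list"

fun wf_trm :: "('f \<Rightarrow> nat) \<Rightarrow> ('f, 'v) trm \<Rightarrow> bool" where
  "wf_trm ar (Var x) = True"
| "wf_trm ar (Fun f ts) = (length ts = ar f \<and> (\<forall>t\<in>set ts. wf_trm ar t))"

fun vars_trm :: "('f, 'v) trm \<Rightarrow> 'v set" where
  "vars_trm (Var x) = {x}"
| "vars_trm (Fun f ts) = (\<Union>t\<in>set ts. vars_trm t)"

fun subst_trm :: "('v \<Rightarrow> ('f, 'w) trm) \<Rightarrow> ('f, 'v) trm \<Rightarrow> ('f, 'w) trm" where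
  "subst_trm \<sigma> (Var x) = \<sigma> x"
| "subst_trm \<sigma> (Fun f ts) = Fun f (map (subst_trm \<sigma>) ts)"

definition plural_type :: "('f \<Rightarrow> nat) \<Rightarrow> bool" where
  "plural_type ar \<longleftrightarrow> (\<forall>f. ar f \<ge> 1) \<and> (\<exists>f. ar f \<ge> 2)"

text \<open>Identities are pairs of terms in the variables x_1, x_2, ... (encoded as naturals).\<close>
type_synonym 'f identity = "('f, nat) trm \<times> ('f, nat) trm"

definition T :: "('f \<Rightarrow> nat) \<Rightarrow> nat \<Rightarrow> ('f, nat) trm set" where
  "T ar n = {t. wf_trm ar t \<and> vars_trm t = {1..n}}"

record ('f, 'a) alg =
  carrier :: "'a set"
  ops :: "'f \<Rightarrow> 'a list \<Rightarrow> 'a"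

definition is_alg :: "('f \<Rightarrow> nat) \<Rightarrow> ('f, 'a) alg \<Rightarrow> bool" where
  "is_alg ar A \<longleftrightarrow> (\<forall>f as. length as = ar f \<and> set as \<subseteq> carrier A \<longrightarrow> ops A f as \<in> carrier A)"

fun eval_trm :: "('f, 'a) alg \<Rightarrow> ('v \<Rightarrow> 'a) \<Rightarrow> ('f, 'v) trm \<Rightarrow> 'a" where
  "eval_trm A \<rho> (Var x) = \<rho> x"
| "eval_trm A \<rho> (Fun f ts) = ops A f (map (eval_trm A \<rho>) ts)"

definition satisfies :: "('f, 'a) alg \<Rightarrow> ('f, 'v) trm \<times> ('f, 'v) trm \<Rightarrow> bool" where
  "satisfies A e \<longleftrightarrow> (\<forall>\<rho>. (\<forall>y \<in> vars_trm (fst e) \<union> vars_trm (snd e). \<rho> y \<in> carrier A)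
        \<longrightarrow> eval_trm A \<rho> (fst e) = eval_trm A \<rho> (snd e))"

definition in_variety :: "('f \<Rightarrow> nat) \<Rightarrow> 'f identity set \<Rightarrow> ('f, 'a) alg \<Rightarrow> bool" where
  "in_variety ar \<Sigma> A \<longleftrightarrow> is_alg ar A \<and> (\<forall>e\<in>\<Sigma>. satisfies A e)"

definition regular_ids :: "('f \<Rightarrow> nat) \<Rightarrow> 'f identity set" where
  "regular_ids ar = {(u, v). wf_trm ar u \<and> wf_trm ar v \<and> vars_trm u = vars_trm v}"

definition in_S :: "('f \<Rightarrow> nat) \<Rightarrow> ('f, 'a) alg \<Rightarrow> bool" where
  "in_S ar A \<longleftrightarrow> in_variety ar (regular_ids ar) A"

definition congruence :: "('f \<Rightarrow> nat) \<Rightarrow> ('f, 'a) alg \<Rightarrow> 'a rel \<Rightarrow> bool" where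
  "congruence ar A \<theta> \<longleftrightarrow> equiv (carrier A) \<theta> \<and>
     (\<forall>f as bs. length as = ar f \<and> length bs = ar f \<and> set as \<subseteq> carrier A \<and> set bs \<subseteq> carrier A
        \<and> list_all2 (\<lambda>a b. (a, b) \<in> \<theta>) as bs \<longrightarrow> (ops A f as, ops A f bs) \<in> \<theta>)"

definition quotient_alg :: "('f, 'a) alg \<Rightarrow> 'a rel \<Rightarrow> ('f, 'a set) alg" where
  "quotient_alg A \<theta> = \<lparr> carrier = carrier A // \<theta>,
      ops = (\<lambda>f Cs. \<theta> `` {ops A f (map (\<lambda>C. SOME a. a \<in> C) Cs)}) \<rparr>"

definition cong_join :: "('f \<Rightarrow> nat) \<Rightarrow> ('f, 'a) alg \<Rightarrow> 'a rel \<Rightarrow> 'a rel \<Rightarrow> 'a rel" where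
  "cong_join ar A \<theta> \<phi> = \<Inter>{\<psi>. congruence ar A \<psi> \<and> \<theta> \<union> \<phi> \<subseteq> \<psi>}"

text \<open>For theta contained in psi, the congruence psi/theta of A/theta.\<close>
definition cong_quot :: "'a rel \<Rightarrow> 'a rel \<Rightarrow> 'a set rel" where
  "cong_quot \<theta> \<psi> = {(\<theta> `` {a}, \<theta> `` {b}) | a b. (a, b) \<in> \<psi>}"

definition sl_replica :: "('f \<Rightarrow> nat) \<Rightarrow> ('f, 'a) alg \<Rightarrow> 'a rel \<Rightarrow> bool" where
  "sl_replica ar A \<rho> \<longleftrightarrow> congruence ar A \<rho> \<and> in_S ar (quotient_alg A \<rho>) \<and>
     (\<forall>\<rho>'. congruence ar A \<rho>' \<and> in_S ar (quotient_alg A \<rho>') \<longrightarrow> \<rho> \<subseteq> \<rho>')"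

text \<open>The subalgebra on a subset (meaningful when the subset is closed under the operations).\<close>
definition restrict_alg :: "('f, 'a) alg \<Rightarrow> 'a set \<Rightarrow> ('f, 'a) alg" where
  "restrict_alg A C = \<lparr> carrier = C, ops = ops A \<rparr>"

definition closed_under_ops :: "('f \<Rightarrow> nat) \<Rightarrow> ('f, 'a) alg \<Rightarrow> 'a set \<Rightarrow> bool" where
  "closed_under_ops ar A C \<longleftrightarrow> (\<forall>f as. length as = ar f \<and> set as \<subseteq> C \<longrightarrow> ops A f as \<in> C)"

definition sl_sum :: "('f \<Rightarrow> nat) \<Rightarrow> 'f identity set \<Rightarrow> ('f, 'a) alg \<Rightarrow> bool" where
  "sl_sum ar \<Sigma> A \<longleftrightarrow> is_alg ar A \<and> (\<exists>\<theta>. congruence ar A \<theta> \<and> in_S ar (quotient_alg A \<theta>) \<and>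
     (\<forall>C \<in> carrier A // \<theta>. closed_under_ops ar A C \<and> in_variety ar \<Sigma> (restrict_alg A C)))"

inductive eq_cons :: "('f \<Rightarrow> nat) \<Rightarrow> 'f identity set \<Rightarrow> ('f, 'v) trm \<Rightarrow> ('f, 'v) trm \<Rightarrow> bool"
  for ar \<Sigma> where
  ax: "(u, v) \<in> \<Sigma> \<Longrightarrow> (\<forall>x. wf_trm ar (\<sigma> x)) \<Longrightarrow> eq_cons ar \<Sigma> (subst_trm \<sigma> u) (subst_trm \<sigma> v)"
| refl: "wf_trm ar t \<Longrightarrow> eq_cons ar \<Sigma> t t"
| sym: "eq_cons ar \<Sigma> s t \<Longrightarrow> eq_cons ar \<Sigma> t s"
| trans: "eq_cons ar \<Sigma> s t \<Longrightarrow> eq_cons ar \<Sigma> t r \<Longrightarrow> eq_cons ar \<Sigma> s r"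
| cong: "length ss = ar f \<Longrightarrow> list_all2 (eq_cons ar \<Sigma>) ss ts \<Longrightarrow> eq_cons ar \<Sigma> (Fun f ss) (Fun f ts)"

definition Id_of :: "('f \<Rightarrow> nat) \<Rightarrow> 'f identity set \<Rightarrow> 'f identity set" where
  "Id_of ar \<Sigma> = {(u, v). wf_trm ar u \<and> wf_trm ar v \<and> eq_cons ar \<Sigma> u v}"

definition prolong_m :: "('f \<Rightarrow> nat) \<Rightarrow> nat \<Rightarrow> 'f identity \<Rightarrow> 'f identity set" where
  "prolong_m ar m e = {(subst_trm r (fst e), subst_trm r (snd e)) | r.
      \<forall>y \<in> vars_trm (fst e) \<union> vars_trm (snd e). r y \<in> T ar m}"

definition prolong :: "('f \<Rightarrow> nat) \<Rightarrow> 'f identity set \<Rightarrow> 'f identity set" where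
  "prolong ar \<Sigma> = (\<Union>e\<in>\<Sigma>. \<Union>m\<in>{1..}. prolong_m ar m e)"

definition term_alg :: "('f \<Rightarrow> nat) \<Rightarrow> 'x set \<Rightarrow> ('f, ('f, 'x) trm) alg" where
  "term_alg ar X = \<lparr> carrier = {t. wf_trm ar t \<and> vars_trm t \<subseteq> X}, ops = Fun \<rparr>"

definition free_alg :: "('f \<Rightarrow> nat) \<Rightarrow> 'f identity set \<Rightarrow> 'x set \<Rightarrow> ('f, ('f, 'x) trm set) alg" where
  "free_alg ar \<Sigma> X = quotient_alg (term_alg ar X)
     {(s, t). s \<in> carrier (term_alg ar X) \<and> t \<in> carrier (term_alg ar X) \<and> eq_cons ar \<Sigma> s t}"

end

theory Submission
  imports Defs
begin

text \<open>
  Being a homomorphic image of the free algebra, A/\<theta> satisfies t(p, q) = p for all terms p, q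
  in the same variables. In any such algebra B, the pairs (p(d), q(d)) given by the regular
  identities (p, q) form a reflexive, symmetric and compatible relation, and absorption makes it
  transitive: if x = p0(d), y = p1(d) = q0(d), z = q1(d), then x = t(x, y) and z = t(z, y) are
  the values of t(p0, p1) and t(q1, q0), two terms in the same variables. So this relation is the
  semilattice replica congruence of B, and t(x, y) = x whenever x, y lie in one of its classes.
  The correspondence between congruences of A above \<theta> and congruences of A/\<theta> finally
  identifies \<psi>/\<theta> as the replica congruence of A/\<theta>.
\<close>

section \<open>Terms and their evaluation\<close>

lemma subst_trm_subst_trm:
  "subst_trm \<tau> (subst_trm \<sigma> s) = subst_trm (\<lambda>x. subst_trm \<tau> (\<sigma> x)) s"
  by (induction s) (auto cong: map_cong)

lemma subst_trm_cong: "(\<And>x. x \<in> vars_trm s \<Longrightarrow> \<sigma> x = \<sigma>' x) \<Longrightarrow> subst_trm \<sigma> s = subst_trm \<sigma>' s"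
proof (induction s)
  case (Fun f ts)
  then have "map (subst_trm \<sigma>) ts = map (subst_trm \<sigma>') ts"
    by (intro map_cong) auto
  then show ?case
    by (simp only: subst_trm.simps)
qed simp

lemma subst_trm_Var: "subst_trm Var s = s"
  by (induction s) (auto simp: map_idI cong: map_cong)

lemma vars_trm_subst_trm: "vars_trm (subst_trm \<sigma> s) = (\<Union>x\<in>vars_trm s. vars_trm (\<sigma> x))"
  by (induction s) (auto cong: map_cong)

lemma wf_trm_subst_trm:
  "wf_trm ar s \<Longrightarrow> \<forall>x\<in>vars_trm s. wf_trm ar (\<sigma> x) \<Longrightarrow> wf_trm ar (subst_trm \<sigma> s)"
  by (induction s) (auto cong: map_cong)

lemma finite_vars_trm: "finite (vars_trm s)"
  by (induction s) (auto cong: map_cong)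

lemma vars_trm_nonempty:
  assumes "plural_type ar" and "wf_trm ar s"
  shows "vars_trm s \<noteq> {}"
  using assms(2)
proof (induction s)
  case (Fun f ts)
  then have "ts \<noteq> []"
    using assms(1) unfolding plural_type_def by (metis list.size(3) not_one_le_zero wf_trm.simps(2))
  with Fun show ?case by (auto simp: neq_Nil_conv)
qed simp

lemma eval_trm_subst_trm:
  "eval_trm A h (subst_trm \<sigma> s) = eval_trm A (\<lambda>x. eval_trm A h (\<sigma> x)) s"
  by (induction s) (auto cong: map_cong)

lemma eval_trm_rename: "eval_trm B e (subst_trm (Var \<circ> g) s) = eval_trm B (e \<circ> g) s"
  by (simp add: eval_trm_subst_trm comp_def)

lemma eval_trm_cong: "(\<And>x. x \<in> vars_trm s \<Longrightarrow> h x = h' x) \<Longrightarrow> eval_trm A h s = eval_trm A h' s"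
proof (induction s)
  case (Fun f ts)
  then have "map (eval_trm A h) ts = map (eval_trm A h') ts"
    by (intro map_cong) auto
  then show ?case
    by (simp only: eval_trm.simps)
qed simp

lemma eval_trm_term_alg: "eval_trm (term_alg ar X) h s = subst_trm h s"
  by (induction s) (auto simp: term_alg_def)

lemma eval_trm_restrict_alg: "eval_trm (restrict_alg A C) h s = eval_trm A h s"
  by (induction s) (simp_all add: restrict_alg_def cong: map_cong)

lemma eval_trm_closed:
  assumes "is_alg ar A" and "wf_trm ar s" and "\<forall>x\<in>vars_trm s. h x \<in> carrier A"
  shows "eval_trm A h s \<in> carrier A"
  using assms(2,3)
proof (induction s)
  case (Fun f ts)
  then have "set (map (eval_trm A h) ts) \<subseteq> carrier A"
    by auto
  with Fun.prems assms(1) show ?case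
    by (simp add: is_alg_def)
qed simp

lemma T_2_iff: "t \<in> T ar 2 \<longleftrightarrow> wf_trm ar t \<and> vars_trm t = {1, 2}"
proof -
  have "{1..2::nat} = {1, 2}"
    by (auto simp: numeral_2_eq_2)
  then show ?thesis
    by (simp add: T_def)
qed

lemma subst_trm_rename_inverse:
  assumes "inj_on \<beta> V" and "vars_trm s \<subseteq> V"
  shows "subst_trm (Var \<circ> inv_into V \<beta>) (subst_trm (Var \<circ> \<beta>) s) = s"
proof -
  have "subst_trm (Var \<circ> inv_into V \<beta>) (subst_trm (Var \<circ> \<beta>) s)
      = subst_trm (\<lambda>x. Var (inv_into V \<beta> (\<beta> x))) s"
    by (simp add: subst_trm_subst_trm)
  also have "\<dots> = subst_trm Var s"
    using assms by (intro subst_trm_cong) auto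
  finally show ?thesis
    by (simp add: subst_trm_Var)
qed

lemma rename_into_T:
  assumes "finite V" and "\<forall>y\<in>Y. wf_trm ar (\<sigma> y) \<and> vars_trm (\<sigma> y) = V"
  obtains r \<tau> where "\<forall>y\<in>Y. r y \<in> T ar (card V)" and "\<forall>y\<in>Y. subst_trm \<tau> (r y) = \<sigma> y"
    and "\<forall>x. wf_trm ar (\<tau> x)"
proof -
  have "\<exists>\<beta>. bij_betw \<beta> V {1..card V}"
    using assms(1) by (intro finite_same_card_bij) simp_all
  then obtain \<beta> where \<beta>: "bij_betw \<beta> V {1..card V}"
    by blast
  define r where "r y = subst_trm (Var \<circ> \<beta>) (\<sigma> y)" for y
  have "r y \<in> T ar (card V)" if "y \<in> Y" for y
  proof -
    have "wf_trm ar (r y)"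
      using assms(2) that by (simp add: r_def wf_trm_subst_trm)
    moreover have "vars_trm (r y) = \<beta> ` V"
      using assms(2) that by (auto simp: r_def vars_trm_subst_trm)
    ultimately show ?thesis
      using bij_betw_imp_surj_on[OF \<beta>] by (simp add: T_def)
  qed
  moreover have "subst_trm (Var \<circ> inv_into V \<beta>) (r y) = \<sigma> y" if "y \<in> Y" for y
    unfolding r_def using bij_betw_imp_inj_on[OF \<beta>] assms(2) that
    by (intro subst_trm_rename_inverse) simp_all
  ultimately show thesis
    using that[of r "Var \<circ> inv_into V \<beta>"] by simp
qed

section \<open>Congruences and quotient algebras\<close>

lemma congruence_equiv: "congruence ar A \<theta> \<Longrightarrow> equiv (carrier A) \<theta>"
  by (simp add: congruence_def)

lemma congruence_ops:
  assumes "congruence ar A \<theta>" and "length as = ar f" and "list_all2 (\<lambda>a b. (a, b) \<in> \<theta>) as bs"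
  shows "(ops A f as, ops A f bs) \<in> \<theta>"
proof -
  have "\<theta> \<subseteq> carrier A \<times> carrier A"
    using assms(1) by (simp add: congruence_def equiv_type)
  with assms(3) have "set as \<subseteq> carrier A \<and> set bs \<subseteq> carrier A"
    by (induction as bs rule: list_all2_induct) auto
  moreover have "length bs = ar f"
    using assms(2,3) by (simp add: list_all2_lengthD)
  ultimately show ?thesis
    using assms unfolding congruence_def by blast
qed

lemma Eps_quotient:
  assumes "equiv S \<theta>" and "C \<in> S // \<theta>"
  shows "(SOME a. a \<in> C) \<in> S" and "\<theta> `` {SOME a. a \<in> C} = C"
  using equiv_Eps_preserves[OF assms] proj_Eps[OF assms] by (simp_all add: proj_def)

lemma quotient_assignment_lift:
  assumes "equiv S \<theta>" and "\<forall>x\<in>V. g x \<in> S // \<theta>"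
  obtains h where "\<forall>x\<in>V. h x \<in> S" and "\<forall>x\<in>V. g x = \<theta> `` {h x}"
  using that[of "\<lambda>x. SOME a. a \<in> g x"] Eps_quotient[OF assms(1)] assms(2) by simp

lemma is_alg_quotient_alg:
  assumes "is_alg ar A" and "congruence ar A \<theta>"
  shows "is_alg ar (quotient_alg A \<theta>)"
  unfolding is_alg_def
proof (intro allI impI)
  fix f Cs
  assume Cs: "length Cs = ar f \<and> set Cs \<subseteq> carrier (quotient_alg A \<theta>)"
  then have "set (map (\<lambda>C. SOME a. a \<in> C) Cs) \<subseteq> carrier A"
    using Eps_quotient(1)[OF congruence_equiv[OF assms(2)]] by (auto simp: quotient_alg_def)
  with Cs assms(1) have "ops A f (map (\<lambda>C. SOME a. a \<in> C) Cs) \<in> carrier A"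
    by (simp add: is_alg_def)
  then show "ops (quotient_alg A \<theta>) f Cs \<in> carrier (quotient_alg A \<theta>)"
    by (simp add: quotient_alg_def quotientI)
qed

lemma ops_quotient_alg:
  assumes "congruence ar A \<theta>" and "set as \<subseteq> carrier A" and "length as = ar f"
  shows "ops (quotient_alg A \<theta>) f (map (\<lambda>a. \<theta> `` {a}) as) = \<theta> `` {ops A f as}"
proof -
  have equiv: "equiv (carrier A) \<theta>"
    using assms(1) by (rule congruence_equiv)
  have "\<theta> `` {SOME b. b \<in> \<theta> `` {a}} = \<theta> `` {a}" if "a \<in> carrier A" for a
    using Eps_quotient(2)[OF equiv quotientI[OF that]] .
  then have "list_all2 (\<lambda>a b. (a, b) \<in> \<theta>) (map (\<lambda>a. SOME b. b \<in> \<theta> `` {a}) as) as"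
    using assms(2) Eps_quotient(1)[OF equiv quotientI]
    by (auto simp: list_all2_map1 eq_equiv_class_iff[OF equiv] intro!: list.rel_refl_strong)
  then have "(ops A f (map (\<lambda>a. SOME b. b \<in> \<theta> `` {a}) as), ops A f as) \<in> \<theta>"
    using congruence_ops[OF assms(1)] assms(3) by simp
  then show ?thesis
    by (simp add: quotient_alg_def o_def equiv_class_eq[OF equiv])
qed

lemma eval_trm_quotient_alg:
  assumes "congruence ar A \<theta>" and "is_alg ar A" and "wf_trm ar s"
    and "\<forall>x\<in>vars_trm s. h x \<in> carrier A" and "\<forall>x\<in>vars_trm s. g x = \<theta> `` {h x}"
  shows "eval_trm (quotient_alg A \<theta>) g s = \<theta> `` {eval_trm A h s}"
  using assms(3-5)
proof (induction s)
  case (Fun f ts)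
  have "map (eval_trm (quotient_alg A \<theta>) g) ts = map (\<lambda>a. \<theta> `` {a}) (map (eval_trm A h) ts)"
    using Fun by auto
  then have "eval_trm (quotient_alg A \<theta>) g (Fun f ts)
      = ops (quotient_alg A \<theta>) f (map (\<lambda>a. \<theta> `` {a}) (map (eval_trm A h) ts))"
    by (simp only: eval_trm.simps)
  also have "\<dots> = \<theta> `` {ops A f (map (eval_trm A h) ts)}"
    using Fun.prems by (intro ops_quotient_alg[OF assms(1)]) (auto intro!: eval_trm_closed[OF assms(2)])
  finally show ?case
    by simp
qed simp

lemma satisfies_quotient_alg:
  assumes "is_alg ar A" and "congruence ar A \<theta>" and "wf_trm ar u" and "wf_trm ar v"
    and "satisfies A (u, v)"
  shows "satisfies (quotient_alg A \<theta>) (u, v)"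
  unfolding satisfies_def
proof (intro allI impI)
  fix g
  assume "\<forall>y\<in>vars_trm (fst (u, v)) \<union> vars_trm (snd (u, v)). g y \<in> carrier (quotient_alg A \<theta>)"
  then have "\<forall>y\<in>vars_trm u \<union> vars_trm v. g y \<in> carrier A // \<theta>"
    by (simp add: quotient_alg_def)
  then obtain h where h: "\<forall>y\<in>vars_trm u \<union> vars_trm v. h y \<in> carrier A"
    and g: "\<forall>y\<in>vars_trm u \<union> vars_trm v. g y = \<theta> `` {h y}"
    using quotient_assignment_lift[OF congruence_equiv[OF assms(2)]] by blast
  have "eval_trm (quotient_alg A \<theta>) g u = \<theta> `` {eval_trm A h u}"
    using h g by (intro eval_trm_quotient_alg[OF assms(2,1,3)]) auto
  also have "\<dots> = \<theta> `` {eval_trm A h v}"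
    using assms(5) h by (simp add: satisfies_def)
  also have "\<dots> = eval_trm (quotient_alg A \<theta>) g v"
    using h g by (intro eval_trm_quotient_alg[OF assms(2,1,4), symmetric]) auto
  finally show "eval_trm (quotient_alg A \<theta>) g (fst (u, v)) = eval_trm (quotient_alg A \<theta>) g (snd (u, v))"
    by simp
qed

lemma satisfies_subst_trm:
  assumes "is_alg ar B" and "satisfies B (u, v)" and "\<forall>y\<in>vars_trm u \<union> vars_trm v. wf_trm ar (r y)"
  shows "satisfies B (subst_trm r u, subst_trm r v)"
  unfolding satisfies_def
proof (intro allI impI)
  fix c
  assume c: "\<forall>y\<in>vars_trm (fst (subst_trm r u, subst_trm r v)) \<union> vars_trm (snd (subst_trm r u, subst_trm r v)).
    c y \<in> carrier B"
  have "\<forall>y\<in>vars_trm u \<union> vars_trm v. eval_trm B c (r y) \<in> carrier B"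
    using c assms(3) by (auto simp: vars_trm_subst_trm intro!: eval_trm_closed[OF assms(1)])
  then show "eval_trm B c (fst (subst_trm r u, subst_trm r v)) = eval_trm B c (snd (subst_trm r u, subst_trm r v))"
    using assms(2) by (simp add: satisfies_def eval_trm_subst_trm)
qed

section \<open>Regular identities and the variety S\<close>

definition regular_rel :: "('f \<Rightarrow> nat) \<Rightarrow> ('f, 'a) alg \<Rightarrow> 'a rel" where
  "regular_rel ar B = {(eval_trm B d p, eval_trm B d q) | d p q.
     (p, q) \<in> regular_ids ar \<and> (\<forall>i\<in>vars_trm p. d i \<in> carrier B)}"

lemma regular_relI:
  "(p, q) \<in> regular_ids ar \<Longrightarrow> \<forall>i\<in>vars_trm p. d i \<in> carrier B
    \<Longrightarrow> (eval_trm B d p, eval_trm B d q) \<in> regular_rel ar B"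
  unfolding regular_rel_def by blast

lemma regular_relE:
  assumes "(x, y) \<in> regular_rel ar B"
  obtains d p q where "(p, q) \<in> regular_ids ar" and "\<forall>i\<in>vars_trm p. d i \<in> carrier B"
    and "x = eval_trm B d p" and "y = eval_trm B d q"
  using assms unfolding regular_rel_def by blast

lemma regular_rel_subset:
  assumes "is_alg ar B"
  shows "regular_rel ar B \<subseteq> carrier B \<times> carrier B"
proof
  fix z
  assume "z \<in> regular_rel ar B"
  then obtain d p q where "(p, q) \<in> regular_ids ar" "\<forall>i\<in>vars_trm p. d i \<in> carrier B"
    "z = (eval_trm B d p, eval_trm B d q)"
    by (metis surj_pair regular_relE)
  then show "z \<in> carrier B \<times> carrier B"
    by (auto simp: regular_ids_def intro!: eval_trm_closed[OF assms])
qed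

lemma regular_rel_quotient_alg:
  assumes "is_alg ar A" and "congruence ar A \<theta>"
  shows "regular_rel ar (quotient_alg A \<theta>) = cong_quot \<theta> (regular_rel ar A)"
proof
  show "regular_rel ar (quotient_alg A \<theta>) \<subseteq> cong_quot \<theta> (regular_rel ar A)"
  proof
    fix z
    assume "z \<in> regular_rel ar (quotient_alg A \<theta>)"
    then obtain g p q where pq: "(p, q) \<in> regular_ids ar"
      and g: "\<forall>i\<in>vars_trm p. g i \<in> carrier (quotient_alg A \<theta>)"
      and z: "z = (eval_trm (quotient_alg A \<theta>) g p, eval_trm (quotient_alg A \<theta>) g q)"
      by (metis surj_pair regular_relE)
    have wf: "wf_trm ar p" "wf_trm ar q" and vars: "vars_trm p = vars_trm q"
      using pq by (auto simp: regular_ids_def)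
    have "\<forall>x\<in>vars_trm p. g x \<in> carrier A // \<theta>"
      using g by (simp add: quotient_alg_def)
    then obtain h where h: "\<forall>x\<in>vars_trm p. h x \<in> carrier A"
      and gh: "\<forall>x\<in>vars_trm p. g x = \<theta> `` {h x}"
      using quotient_assignment_lift[OF congruence_equiv[OF assms(2)]] by blast
    have "eval_trm (quotient_alg A \<theta>) g p = \<theta> `` {eval_trm A h p}"
      and "eval_trm (quotient_alg A \<theta>) g q = \<theta> `` {eval_trm A h q}"
      using h gh vars by (simp_all add: eval_trm_quotient_alg[OF assms(2,1)] wf)
    then show "z \<in> cong_quot \<theta> (regular_rel ar A)"
      using regular_relI[OF pq h] z unfolding cong_quot_def by blast
  qed
next
  show "cong_quot \<theta> (regular_rel ar A) \<subseteq> regular_rel ar (quotient_alg A \<theta>)"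
  proof
    fix z
    assume "z \<in> cong_quot \<theta> (regular_rel ar A)"
    then obtain d p q where pq: "(p, q) \<in> regular_ids ar" and d: "\<forall>i\<in>vars_trm p. d i \<in> carrier A"
      and z: "z = (\<theta> `` {eval_trm A d p}, \<theta> `` {eval_trm A d q})"
      unfolding cong_quot_def by (auto elim: regular_relE)
    have "\<forall>i\<in>vars_trm p. \<theta> `` {d i} \<in> carrier (quotient_alg A \<theta>)"
      using d by (simp add: quotient_alg_def quotientI)
    moreover have "z = (eval_trm (quotient_alg A \<theta>) (\<lambda>i. \<theta> `` {d i}) p,
        eval_trm (quotient_alg A \<theta>) (\<lambda>i. \<theta> `` {d i}) q)"
      using pq d z by (simp add: regular_ids_def eval_trm_quotient_alg[OF assms(2,1)])
    ultimately show "z \<in> regular_rel ar (quotient_alg A \<theta>)"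
      using regular_relI[OF pq] by simp
  qed
qed

lemma in_S_iff_regular_rel:
  fixes B :: "('f, 'a) alg"
  shows "in_S ar B \<longleftrightarrow> is_alg ar B \<and> regular_rel ar B \<subseteq> Id"
proof -
  have "satisfies B e \<longleftrightarrow>
      (\<forall>d. (\<forall>i\<in>vars_trm (fst e). d i \<in> carrier B) \<longrightarrow> eval_trm B d (fst e) = eval_trm B d (snd e))"
    if "e \<in> regular_ids ar" for e :: "'f identity"
    using that by (auto simp: satisfies_def regular_ids_def)
  moreover have "regular_rel ar B \<subseteq> Id \<longleftrightarrow> (\<forall>e\<in>regular_ids ar. \<forall>d.
      (\<forall>i\<in>vars_trm (fst e). d i \<in> carrier B) \<longrightarrow> eval_trm B d (fst e) = eval_trm B d (snd e))"
    unfolding regular_rel_def by fastforce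
  ultimately show ?thesis
    unfolding in_S_def in_variety_def by blast
qed

lemma in_S_quotient_alg_iff:
  assumes "is_alg ar A" and "congruence ar A \<theta>"
  shows "in_S ar (quotient_alg A \<theta>) \<longleftrightarrow> regular_rel ar A \<subseteq> \<theta>"
proof -
  have equiv: "equiv (carrier A) \<theta>"
    using assms(2) by (rule congruence_equiv)
  have "in_S ar (quotient_alg A \<theta>) \<longleftrightarrow> cong_quot \<theta> (regular_rel ar A) \<subseteq> Id"
    by (simp add: in_S_iff_regular_rel is_alg_quotient_alg[OF assms] regular_rel_quotient_alg[OF assms])
  also have "\<dots> \<longleftrightarrow> regular_rel ar A \<subseteq> \<theta>"
  proof
    assume quot: "cong_quot \<theta> (regular_rel ar A) \<subseteq> Id"
    show "regular_rel ar A \<subseteq> \<theta>"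
    proof clarify
      fix a b
      assume ab: "(a, b) \<in> regular_rel ar A"
      then have "\<theta> `` {a} = \<theta> `` {b}"
        using quot unfolding cong_quot_def by blast
      with ab show "(a, b) \<in> \<theta>"
        using regular_rel_subset[OF assms(1)] eq_equiv_class_iff[OF equiv] by blast
    qed
  next
    assume "regular_rel ar A \<subseteq> \<theta>"
    then show "cong_quot \<theta> (regular_rel ar A) \<subseteq> Id"
      unfolding cong_quot_def using equiv_class_eq[OF equiv] by blast
  qed
  finally show ?thesis .
qed

section \<open>The replica congruence of a quotient\<close>

lemma congruence_Inter:
  assumes "F \<noteq> {}" and "\<forall>\<sigma>\<in>F. congruence ar A \<sigma>"
  shows "congruence ar A (\<Inter>F)"
proof -
  have equivs: "\<forall>\<sigma>\<in>F. equiv (carrier A) \<sigma>"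
    using assms(2) congruence_equiv by blast
  have "equiv (carrier A) (\<Inter>F)"
  proof (rule equivI)
    obtain \<sigma> where "\<sigma> \<in> F"
      using assms(1) by blast
    then have "\<Inter>F \<subseteq> \<sigma>"
      by (rule Inter_lower)
    also have "\<sigma> \<subseteq> carrier A \<times> carrier A"
      using \<open>\<sigma> \<in> F\<close> equivs by (simp add: equiv_type)
    finally show "\<Inter>F \<subseteq> carrier A \<times> carrier A" .
    show "refl_on (carrier A) (\<Inter>F)"
      using equivs by (auto intro!: refl_onI elim: equivE dest: refl_onD)
    show "sym (\<Inter>F)"
      using sym_INTER[of F id] equivs by (simp add: equiv_def)
    show "trans (\<Inter>F)"
      using trans_INTER[of F id] equivs by (simp add: equiv_def)
  qed
  moreover have "(ops A f as, ops A f bs) \<in> \<Inter>F"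
    if "length as = ar f" and "list_all2 (\<lambda>a b. (a, b) \<in> \<Inter>F) as bs" for f as bs
  proof
    fix \<sigma>
    assume "\<sigma> \<in> F"
    have "list_all2 (\<lambda>a b. (a, b) \<in> \<sigma>) as bs"
      using that(2) by (rule list_all2_mono) (use \<open>\<sigma> \<in> F\<close> in blast)
    moreover have "congruence ar A \<sigma>"
      using assms(2) \<open>\<sigma> \<in> F\<close> by blast
    ultimately show "(ops A f as, ops A f bs) \<in> \<sigma>"
      using that(1) by (intro congruence_ops)
  qed
  ultimately show ?thesis
    unfolding congruence_def by simp
qed

lemma congruence_full:
  assumes "is_alg ar A"
  shows "congruence ar A (carrier A \<times> carrier A)"
proof -
  have "equiv (carrier A) (carrier A \<times> carrier A)"
    by (rule equivI) (auto intro!: refl_onI symI transI)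
  with assms show ?thesis
    unfolding congruence_def is_alg_def by blast
qed

lemma congruence_cong_join:
  assumes "is_alg ar A" and "congruence ar A \<theta>" and "congruence ar A \<phi>"
  shows "congruence ar A (cong_join ar A \<theta> \<phi>)"
  unfolding cong_join_def
proof (rule congruence_Inter)
  have "\<theta> \<union> \<phi> \<subseteq> carrier A \<times> carrier A"
    using equiv_type[OF congruence_equiv[OF assms(2)]] equiv_type[OF congruence_equiv[OF assms(3)]]
    by (rule Un_least)
  then have "carrier A \<times> carrier A \<in> {\<psi>. congruence ar A \<psi> \<and> \<theta> \<union> \<phi> \<subseteq> \<psi>}"
    using congruence_full[OF assms(1)] by simp
  then show "{\<psi>. congruence ar A \<psi> \<and> \<theta> \<union> \<phi> \<subseteq> \<psi>} \<noteq> {}"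
    by blast
qed simp

lemma cong_join_upper: "\<theta> \<union> \<phi> \<subseteq> cong_join ar A \<theta> \<phi>"
  unfolding cong_join_def by blast

lemma cong_join_least: "congruence ar A \<sigma> \<Longrightarrow> \<theta> \<union> \<phi> \<subseteq> \<sigma> \<Longrightarrow> cong_join ar A \<theta> \<phi> \<subseteq> \<sigma>"
  unfolding cong_join_def by blast

lemma cong_quotE:
  assumes "(C, D) \<in> cong_quot \<theta> \<psi>" and "\<psi> \<subseteq> S \<times> S"
  obtains a b where "a \<in> S" and "b \<in> S" and "(a, b) \<in> \<psi>" and "C = \<theta> `` {a}" and "D = \<theta> `` {b}"
proof -
  obtain a b where ab: "(a, b) \<in> \<psi>" "C = \<theta> `` {a}" "D = \<theta> `` {b}"
    using assms(1) unfolding cong_quot_def by blast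
  moreover have "a \<in> S" "b \<in> S"
    using ab(1) assms(2) by auto
  ultimately show thesis
    using that by simp
qed

lemma cong_quot_iff:
  assumes "equiv S \<theta>" and "equiv S \<psi>" and "\<theta> \<subseteq> \<psi>" and "a \<in> S" and "b \<in> S"
  shows "(\<theta> `` {a}, \<theta> `` {b}) \<in> cong_quot \<theta> \<psi> \<longleftrightarrow> (a, b) \<in> \<psi>"
proof
  assume "(\<theta> `` {a}, \<theta> `` {b}) \<in> cong_quot \<theta> \<psi>"
  then obtain a' b' where a'b': "a' \<in> S" "b' \<in> S" "(a', b') \<in> \<psi>"
    and classes: "\<theta> `` {a} = \<theta> `` {a'}" "\<theta> `` {b'} = \<theta> `` {b}"
    using equiv_type[OF assms(2)] by (metis cong_quotE)
  then have "(a, a') \<in> \<theta>" "(b', b) \<in> \<theta>"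
    using eq_equiv_class_iff[OF assms(1)] assms(4,5) by simp_all
  then have "(a, a') \<in> \<psi>" "(a', b') \<in> \<psi>" "(b', b) \<in> \<psi>"
    using assms(3) a'b'(3) by auto
  moreover have "trans \<psi>"
    using assms(2) by (simp add: equiv_def)
  ultimately show "(a, b) \<in> \<psi>"
    by (meson transD)
qed (auto simp: cong_quot_def)

lemma equiv_cong_quot:
  assumes "equiv S \<theta>" and "equiv S \<psi>" and "\<theta> \<subseteq> \<psi>"
  shows "equiv (S // \<theta>) (cong_quot \<theta> \<psi>)"
proof (rule equivI)
  let ?Q = "cong_quot \<theta> \<psi>"
  note iff = cong_quot_iff[OF assms]
  note quotE = cong_quotE[OF _ equiv_type[OF assms(2)]]
  show "?Q \<subseteq> S // \<theta> \<times> S // \<theta>"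
    by (auto elim!: quotE intro: quotientI)
  show "refl_on (S // \<theta>) ?Q"
  proof (rule refl_onI)
    fix C
    assume "C \<in> S // \<theta>"
    then obtain a where "a \<in> S" "C = \<theta> `` {a}"
      by (rule quotientE)
    moreover have "(a, a) \<in> \<psi>"
      using assms(2) \<open>a \<in> S\<close> by (simp add: equiv_class_eq_iff)
    ultimately show "(C, C) \<in> ?Q"
      using iff by simp
  qed
  show "sym ?Q"
  proof (rule symI)
    fix C D
    assume "(C, D) \<in> ?Q"
    then obtain a b where "(a, b) \<in> \<psi>" "C = \<theta> `` {a}" "D = \<theta> `` {b}"
      by (rule quotE)
    moreover have "(b, a) \<in> \<psi>"
      using assms(2) \<open>(a, b) \<in> \<psi>\<close> by (simp add: equiv_class_eq_iff)
    ultimately show "(D, C) \<in> ?Q"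
      unfolding cong_quot_def by blast
  qed
  show "trans ?Q"
  proof (rule transI)
    fix C D E
    assume CD: "(C, D) \<in> ?Q" and DE: "(D, E) \<in> ?Q"
    obtain a b where "a \<in> S" "b \<in> S" "(a, b) \<in> \<psi>" "C = \<theta> `` {a}" "D = \<theta> `` {b}"
      using CD by (rule quotE)
    moreover obtain b' c where "b' \<in> S" "c \<in> S" "(b', c) \<in> \<psi>" "D = \<theta> `` {b'}" "E = \<theta> `` {c}"
      using DE by (rule quotE)
    ultimately have "(b, c) \<in> \<psi>"
      using iff DE by simp
    with \<open>(a, b) \<in> \<psi>\<close> have "(a, c) \<in> \<psi>"
      using assms(2) by (meson equivE transD)
    with \<open>C = \<theta> `` {a}\<close> \<open>E = \<theta> `` {c}\<close> show "(C, E) \<in> ?Q"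
      unfolding cong_quot_def by blast
  qed
qed

lemma congruence_cong_quot:
  assumes "congruence ar A \<theta>" and "congruence ar A \<psi>" and "\<theta> \<subseteq> \<psi>"
  shows "congruence ar (quotient_alg A \<theta>) (cong_quot \<theta> \<psi>)"
proof -
  let ?Q = "cong_quot \<theta> \<psi>"
  have equiv\<theta>: "equiv (carrier A) \<theta>" and equiv\<psi>: "equiv (carrier A) \<psi>"
    using assms(1,2) by (simp_all add: congruence_equiv)
  note iff = cong_quot_iff[OF equiv\<theta> equiv\<psi> assms(3)]
  have "(ops (quotient_alg A \<theta>) f Cs, ops (quotient_alg A \<theta>) f Ds) \<in> ?Q"
    if "length Cs = ar f" and "set Cs \<subseteq> carrier A // \<theta>" and "set Ds \<subseteq> carrier A // \<theta>"
      and "list_all2 (\<lambda>C D. (C, D) \<in> ?Q) Cs Ds" for f Cs Ds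
  proof -
    let ?rep = "\<lambda>C. SOME a. a \<in> C"
    have rep: "(?rep C, ?rep D) \<in> \<psi>" if "C \<in> carrier A // \<theta>" "D \<in> carrier A // \<theta>" "(C, D) \<in> ?Q" for C D
      using that iff[of "?rep C" "?rep D"] Eps_quotient[OF equiv\<theta>, of C] Eps_quotient[OF equiv\<theta>, of D]
      by simp
    have "list_all2 (\<lambda>C D. (?rep C, ?rep D) \<in> \<psi>) Cs Ds"
      using that(4) by (rule list.rel_mono_strong) (use rep that(2,3) in blast)
    then have "list_all2 (\<lambda>a b. (a, b) \<in> \<psi>) (map ?rep Cs) (map ?rep Ds)"
      by (simp add: list_all2_map1 list_all2_map2)
    then have "(ops A f (map ?rep Cs), ops A f (map ?rep Ds)) \<in> \<psi>"
      using that(1) by (intro congruence_ops[OF assms(2)]) simp_all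
    then show ?thesis
      unfolding quotient_alg_def cong_quot_def by auto
  qed
  with equiv_cong_quot[OF equiv\<theta> equiv\<psi> assms(3)] show ?thesis
    unfolding congruence_def by (simp add: quotient_alg_def)
qed

lemma congruence_pullback:
  assumes "is_alg ar A" and "congruence ar A \<theta>" and "congruence ar (quotient_alg A \<theta>) \<sigma>"
  shows "congruence ar A {(x, y). x \<in> carrier A \<and> y \<in> carrier A \<and> (\<theta> `` {x}, \<theta> `` {y}) \<in> \<sigma>}"
    (is "congruence ar A ?\<sigma>")
proof -
  have equiv: "equiv (carrier A // \<theta>) \<sigma>"
    using congruence_equiv[OF assms(3)] by (simp add: quotient_alg_def)
  have "equiv (carrier A) ?\<sigma>"
  proof (rule equivI)
    show "?\<sigma> \<subseteq> carrier A \<times> carrier A"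
      by auto
    show "refl_on (carrier A) ?\<sigma>"
      using equiv by (auto intro!: refl_onI quotientI simp: equiv_class_eq_iff)
    show "sym ?\<sigma>"
      using equiv by (auto intro!: symI simp: equiv_class_eq_iff)
    show "trans ?\<sigma>"
      using equiv by (auto intro!: transI simp: equiv_class_eq_iff)
  qed
  moreover have "(ops A f as, ops A f bs) \<in> ?\<sigma>"
    if "length as = ar f" and "length bs = ar f" and "set as \<subseteq> carrier A" and "set bs \<subseteq> carrier A"
      and "list_all2 (\<lambda>a b. (a, b) \<in> ?\<sigma>) as bs" for f as bs
  proof -
    have "list_all2 (\<lambda>C D. (C, D) \<in> \<sigma>) (map (\<lambda>a. \<theta> `` {a}) as) (map (\<lambda>a. \<theta> `` {a}) bs)"
      using that(5) by (auto simp: list_all2_map1 list_all2_map2 elim: list_all2_mono)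
    then have "(ops (quotient_alg A \<theta>) f (map (\<lambda>a. \<theta> `` {a}) as),
        ops (quotient_alg A \<theta>) f (map (\<lambda>a. \<theta> `` {a}) bs)) \<in> \<sigma>"
      using that(1) by (intro congruence_ops[OF assms(3)]) simp_all
    then have "(\<theta> `` {ops A f as}, \<theta> `` {ops A f bs}) \<in> \<sigma>"
      using that(1-4) by (simp add: ops_quotient_alg[OF assms(2)])
    moreover have "ops A f as \<in> carrier A" "ops A f bs \<in> carrier A"
      using assms(1) that(1-4) by (simp_all add: is_alg_def)
    ultimately show ?thesis
      by simp
  qed
  ultimately show ?thesis
    unfolding congruence_def by blast
qed

lemma cong_quot_cong_join_least:
  assumes "is_alg ar A" and "congruence ar A \<theta>" and "sl_replica ar A \<rho>"
    and "congruence ar (quotient_alg A \<theta>) \<sigma>" and "regular_rel ar (quotient_alg A \<theta>) \<subseteq> \<sigma>"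
  shows "cong_quot \<theta> (cong_join ar A \<theta> \<rho>) \<subseteq> \<sigma>"
proof -
  let ?\<sigma> = "{(x, y). x \<in> carrier A \<and> y \<in> carrier A \<and> (\<theta> `` {x}, \<theta> `` {y}) \<in> \<sigma>}"
  have pullback: "congruence ar A ?\<sigma>"
    using assms(1,2,4) by (rule congruence_pullback)
  have "regular_rel ar A \<subseteq> ?\<sigma>"
    using assms(5) regular_rel_subset[OF assms(1)]
    unfolding regular_rel_quotient_alg[OF assms(1,2)] cong_quot_def by blast
  then have "\<rho> \<subseteq> ?\<sigma>"
    using assms(3) pullback in_S_quotient_alg_iff[OF assms(1) pullback] unfolding sl_replica_def by blast
  moreover have "\<theta> \<subseteq> ?\<sigma>"
  proof clarify
    fix x y
    assume "(x, y) \<in> \<theta>"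
    moreover have "equiv (carrier A // \<theta>) \<sigma>"
      using congruence_equiv[OF assms(4)] by (simp add: quotient_alg_def)
    ultimately show "x \<in> carrier A \<and> y \<in> carrier A \<and> (\<theta> `` {x}, \<theta> `` {y}) \<in> \<sigma>"
      using congruence_equiv[OF assms(2)] by (auto simp: equiv_class_eq_iff intro: quotientI)
  qed
  ultimately have "cong_join ar A \<theta> \<rho> \<subseteq> ?\<sigma>"
    using cong_join_least[OF pullback] by blast
  then show ?thesis
    unfolding cong_quot_def by blast
qed

lemma sl_replica_quotient_alg:
  assumes "is_alg ar A" and "congruence ar A \<theta>" and "sl_replica ar A \<rho>"
  shows "sl_replica ar (quotient_alg A \<theta>) (cong_quot \<theta> (cong_join ar A \<theta> \<rho>))"
proof -
  let ?\<psi> = "cong_join ar A \<theta> \<rho>"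
  have quot_alg: "is_alg ar (quotient_alg A \<theta>)"
    using assms(1,2) by (rule is_alg_quotient_alg)
  have \<rho>: "congruence ar A \<rho>" "regular_rel ar A \<subseteq> \<rho>"
    using assms(3) in_S_quotient_alg_iff[OF assms(1)] unfolding sl_replica_def by auto
  have \<psi>: "congruence ar A ?\<psi>" "\<theta> \<subseteq> ?\<psi>" "\<rho> \<subseteq> ?\<psi>"
    using congruence_cong_join[OF assms(1,2) \<rho>(1)] cong_join_upper[of \<theta> \<rho> ar A] by auto
  have quot_cong: "congruence ar (quotient_alg A \<theta>) (cong_quot \<theta> ?\<psi>)"
    using assms(2) \<psi>(1,2) by (rule congruence_cong_quot)
  have "regular_rel ar (quotient_alg A \<theta>) \<subseteq> cong_quot \<theta> ?\<psi>"
    using \<rho>(2) \<psi>(3) unfolding regular_rel_quotient_alg[OF assms(1,2)] cong_quot_def by blast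
  then have "in_S ar (quotient_alg (quotient_alg A \<theta>) (cong_quot \<theta> ?\<psi>))"
    using in_S_quotient_alg_iff[OF quot_alg quot_cong] by simp
  with quot_cong show ?thesis
    using cong_quot_cong_join_least[OF assms] in_S_quotient_alg_iff[OF quot_alg]
    unfolding sl_replica_def by blast
qed

section \<open>Algebras satisfying the prolonged absorption law\<close>

definition binary_term_op :: "('f, 'a) alg \<Rightarrow> ('f, nat) trm \<Rightarrow> 'a \<Rightarrow> 'a \<Rightarrow> 'a" where
  "binary_term_op B t x y = eval_trm B (\<lambda>i. if i = 1 then x else y) t"

text \<open>Up to renaming of variables, the identities t(p, q) = p for regular pairs (p, q) are those
  of the prolongation of t(x1, x2) = x1.\<close>
definition satisfies_prolonged :: "('f \<Rightarrow> nat) \<Rightarrow> ('f, nat) trm \<Rightarrow> ('f, 'a) alg \<Rightarrow> bool" where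
  "satisfies_prolonged ar t B \<longleftrightarrow>
     (\<forall>(p, q)\<in>regular_ids ar. satisfies B (subst_trm (\<lambda>i. if i = 1 then p else q) t, p))"

lemma eval_trm_subst_binary:
  "eval_trm B d (subst_trm (\<lambda>i. if i = 1 then p else q) t)
    = binary_term_op B t (eval_trm B d p) (eval_trm B d q)"
proof -
  have "(\<lambda>i. eval_trm B d (if i = 1 then p else q)) = (\<lambda>i. if i = 1 then eval_trm B d p else eval_trm B d q)"
    by auto
  then show ?thesis
    unfolding eval_trm_subst_trm binary_term_op_def by (rule arg_cong)
qed

lemma satisfies_prolongedD:
  assumes "satisfies_prolonged ar t B" and "(p, q) \<in> regular_ids ar"
    and "\<forall>i\<in>vars_trm p. d i \<in> carrier B"
  shows "binary_term_op B t (eval_trm B d p) (eval_trm B d q) = eval_trm B d p"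
proof -
  let ?tpq = "subst_trm (\<lambda>i. if i = 1 then p else q) t"
  have "vars_trm (if i = 1 then p else q) \<subseteq> vars_trm p" for i :: nat
    using assms(2) by (simp add: regular_ids_def)
  then have "\<forall>y\<in>vars_trm ?tpq \<union> vars_trm p. d y \<in> carrier B"
    using assms(3) by (auto simp: vars_trm_subst_trm)
  moreover have "satisfies B (?tpq, p)"
    using bspec[OF assms(1)[unfolded satisfies_prolonged_def] assms(2)] by simp
  ultimately have "eval_trm B d ?tpq = eval_trm B d p"
    unfolding satisfies_def by simp
  then show ?thesis
    by (simp only: eval_trm_subst_binary)
qed

lemma regular_rel_absorb:
  assumes "satisfies_prolonged ar t B" and "(x, y) \<in> regular_rel ar B"
  shows "binary_term_op B t x y = x"
  using assms(2) by (rule regular_relE) (use satisfies_prolongedD[OF assms(1)] in blast)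

lemma regular_ids_rename:
  "(p, q) \<in> regular_ids ar \<Longrightarrow> (subst_trm (Var \<circ> g) p, subst_trm (Var \<circ> g) q) \<in> regular_ids ar"
  by (simp add: regular_ids_def wf_trm_subst_trm vars_trm_subst_trm)

lemma regular_rel_common_assignment:
  fixes B :: "('f, 'a) alg"
  assumes "list_all2 (\<lambda>x y. (x, y) \<in> regular_rel ar B) xs ys"
  shows "\<exists>d ps qs. list_all2 (\<lambda>p q. (p, q) \<in> regular_ids ar) ps qs
    \<and> (\<forall>p\<in>set ps. \<forall>i\<in>vars_trm p. d i \<in> carrier B)
    \<and> xs = map (eval_trm B d) ps \<and> ys = map (eval_trm B d) qs"
  using assms
proof (induction rule: list_all2_induct)
  case Nil
  show ?case
    by simp
next
  case (Cons x xs y ys)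
  obtain d0 p q where pq: "(p, q) \<in> regular_ids ar" "\<forall>i\<in>vars_trm p. d0 i \<in> carrier B"
    "x = eval_trm B d0 p" "y = eval_trm B d0 q"
    using Cons.hyps(1) by (rule regular_relE)
  obtain d ps qs where IH: "list_all2 (\<lambda>p q. (p, q) \<in> regular_ids ar) ps qs"
    "\<forall>p\<in>set ps. \<forall>i\<in>vars_trm p. d i \<in> carrier B" "xs = map (eval_trm B d) ps" "ys = map (eval_trm B d) qs"
    using Cons.IH by (elim exE conjE) simp
  define e where "e k = (if even k then d0 (k div 2) else d (k div 2))" for k
  define ev od :: "('f, nat) trm \<Rightarrow> ('f, nat) trm"
    where "ev = subst_trm (Var \<circ> (\<lambda>j. 2 * j))" and "od = subst_trm (Var \<circ> (\<lambda>j. 2 * j + 1))"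
  have e_ev: "eval_trm B e (ev s) = eval_trm B d0 s" and e_od: "eval_trm B e (od s) = eval_trm B d s" for s
    unfolding ev_def od_def eval_trm_rename by (simp_all add: e_def comp_def)
  have "list_all2 (\<lambda>p q. (p, q) \<in> regular_ids ar) (ev p # map od ps) (ev q # map od qs)"
    using pq(1) IH(1) by (simp add: ev_def od_def list_all2_map1 list_all2_map2 regular_ids_rename
        list.rel_mono_strong)
  moreover have "\<forall>s\<in>set (ev p # map od ps). \<forall>i\<in>vars_trm s. e i \<in> carrier B"
    using pq(2) IH(2) by (auto simp: ev_def od_def e_def vars_trm_subst_trm)
  moreover have "x # xs = map (eval_trm B e) (ev p # map od ps)" "y # ys = map (eval_trm B e) (ev q # map od qs)"
    using pq(3,4) IH(3,4) by (simp_all add: e_ev e_od)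
  ultimately show ?case
    by (intro exI conjI)
qed

lemma regular_rel_refl: "x \<in> carrier B \<Longrightarrow> (x, x) \<in> regular_rel ar B"
  using regular_relI[of "Var 0" "Var 0" ar "\<lambda>_. x" B] by (simp add: regular_ids_def)

lemma regular_rel_sym:
  assumes "(x, y) \<in> regular_rel ar B"
  shows "(y, x) \<in> regular_rel ar B"
proof -
  obtain d p q where "(p, q) \<in> regular_ids ar" "\<forall>i\<in>vars_trm p. d i \<in> carrier B"
    "x = eval_trm B d p" "y = eval_trm B d q"
    using assms by (rule regular_relE)
  moreover from this have "(q, p) \<in> regular_ids ar" "\<forall>i\<in>vars_trm q. d i \<in> carrier B"
    by (auto simp: regular_ids_def)
  ultimately show ?thesis
    using regular_relI by metis
qed

lemma regular_rel_trans:
  assumes "t \<in> T ar 2" and "satisfies_prolonged ar t B"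
    and "(x, y) \<in> regular_rel ar B" and "(y, z) \<in> regular_rel ar B"
  shows "(x, z) \<in> regular_rel ar B"
proof -
  obtain d ps qs where ids: "list_all2 (\<lambda>p q. (p, q) \<in> regular_ids ar) ps qs"
    and d: "\<forall>p\<in>set ps. \<forall>i\<in>vars_trm p. d i \<in> carrier B"
    and xy: "[x, y] = map (eval_trm B d) ps" and yz: "[y, z] = map (eval_trm B d) qs"
    using regular_rel_common_assignment[of ar B "[x, y]" "[y, z]"] assms(3,4)
    by (simp del: list.map) (elim exE conjE, simp)
  obtain p0 p1 q0 q1 where "ps = [p0, p1]" and "qs = [q0, q1]"
    using xy yz by (auto simp: Cons_eq_map_conv)
  with ids d xy yz have ids: "(p0, q0) \<in> regular_ids ar" "(p1, q1) \<in> regular_ids ar"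
    and vals: "x = eval_trm B d p0" "y = eval_trm B d p1" "y = eval_trm B d q0" "z = eval_trm B d q1"
    and "\<forall>i\<in>vars_trm p0 \<union> vars_trm p1. d i \<in> carrier B"
    by auto
  let ?P = "subst_trm (\<lambda>i. if i = 1 then p0 else p1) t"
  let ?Q = "subst_trm (\<lambda>i. if i = 1 then q1 else q0) t"
  have t: "wf_trm ar t" "vars_trm t = {1, 2}"
    using assms(1) by (simp_all add: T_2_iff)
  have "(?P, ?Q) \<in> regular_ids ar"
    using ids t by (auto simp: regular_ids_def vars_trm_subst_trm intro!: wf_trm_subst_trm)
  moreover have "eval_trm B d ?P = x"
    unfolding eval_trm_subst_binary using regular_rel_absorb[OF assms(2,3)] vals by simp
  moreover have "eval_trm B d ?Q = z"
    unfolding eval_trm_subst_binary using regular_rel_absorb[OF assms(2) regular_rel_sym[OF assms(4)]] vals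
    by simp
  moreover have "\<forall>i\<in>vars_trm ?P. d i \<in> carrier B"
    using \<open>\<forall>i\<in>vars_trm p0 \<union> vars_trm p1. d i \<in> carrier B\<close> t by (auto simp: vars_trm_subst_trm)
  ultimately show ?thesis
    using regular_relI by metis
qed

lemma regular_rel_ops:
  assumes "length as = ar f" and "list_all2 (\<lambda>a b. (a, b) \<in> regular_rel ar B) as bs"
  shows "(ops B f as, ops B f bs) \<in> regular_rel ar B"
proof -
  obtain d ps qs where ids: "list_all2 (\<lambda>p q. (p, q) \<in> regular_ids ar) ps qs"
    and d: "\<forall>p\<in>set ps. \<forall>i\<in>vars_trm p. d i \<in> carrier B"
    and vals: "as = map (eval_trm B d) ps" "bs = map (eval_trm B d) qs"
    using regular_rel_common_assignment[OF assms(2)] by (elim exE conjE) simp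
  have "(\<Union>p\<in>set ps. vars_trm p) = (\<Union>q\<in>set qs. vars_trm q)
      \<and> (\<forall>p\<in>set ps. wf_trm ar p) \<and> (\<forall>q\<in>set qs. wf_trm ar q)"
    using ids by (induction rule: list_all2_induct) (auto simp: regular_ids_def)
  moreover have "length ps = ar f" "length qs = ar f"
    using assms(1) vals ids by (simp_all add: list_all2_lengthD)
  ultimately have "(Fun f ps, Fun f qs) \<in> regular_ids ar"
    by (simp add: regular_ids_def)
  with d have "(eval_trm B d (Fun f ps), eval_trm B d (Fun f qs)) \<in> regular_rel ar B"
    by (intro regular_relI) auto
  with vals show ?thesis
    by simp
qed

lemma congruence_regular_rel:
  assumes "is_alg ar B" and "t \<in> T ar 2" and "satisfies_prolonged ar t B"
  shows "congruence ar B (regular_rel ar B)"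
proof -
  have "equiv (carrier B) (regular_rel ar B)"
  proof (rule equivI)
    show "regular_rel ar B \<subseteq> carrier B \<times> carrier B"
      using assms(1) by (rule regular_rel_subset)
    show "refl_on (carrier B) (regular_rel ar B)"
      by (rule refl_onI) (rule regular_rel_refl)
    show "sym (regular_rel ar B)"
      by (rule symI) (rule regular_rel_sym)
    show "trans (regular_rel ar B)"
      by (rule transI) (rule regular_rel_trans[OF assms(2,3)])
  qed
  then show ?thesis
    unfolding congruence_def by (simp add: regular_rel_ops)
qed

lemma sl_replica_eq_regular_rel:
  assumes "is_alg ar B" and "t \<in> T ar 2" and "satisfies_prolonged ar t B" and "sl_replica ar B \<rho>"
  shows "\<rho> = regular_rel ar B"
proof
  have "congruence ar B (regular_rel ar B)"
    using assms(1-3) by (rule congruence_regular_rel)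
  then show "\<rho> \<subseteq> regular_rel ar B"
    using assms(4) in_S_quotient_alg_iff[OF assms(1)] unfolding sl_replica_def by blast
  show "regular_rel ar B \<subseteq> \<rho>"
    using assms(4) in_S_quotient_alg_iff[OF assms(1)] unfolding sl_replica_def by blast
qed

text \<open>The classes are closed because f(a, ..., a) = a is a regular identity; this needs every
  arity to be positive.\<close>
lemma closed_under_ops_quotient_class:
  assumes "plural_type ar" and "congruence ar B \<rho>" and "regular_rel ar B \<subseteq> \<rho>"
    and "C \<in> carrier B // \<rho>"
  shows "closed_under_ops ar B C"
  unfolding closed_under_ops_def
proof (intro allI impI)
  fix f Ds
  assume Ds: "length Ds = ar f \<and> set Ds \<subseteq> C"
  obtain a where a: "a \<in> carrier B" "C = \<rho> `` {a}"
    using assms(4) by (rule quotientE)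
  have equiv: "equiv (carrier B) \<rho>"
    using assms(2) by (rule congruence_equiv)
  have "list_all2 (\<lambda>x y. (x, y) \<in> \<rho>) (replicate (ar f) a) Ds"
  proof -
    have "\<forall>D\<in>set Ds. (a, D) \<in> \<rho>"
      using Ds a by auto
    then show ?thesis
      using Ds by (simp add: list_all2_conv_all_nth)
  qed
  then have "(ops B f (replicate (ar f) a), ops B f Ds) \<in> \<rho>"
    by (intro congruence_ops[OF assms(2)]) simp_all
  moreover have "(ops B f (replicate (ar f) a), a) \<in> \<rho>"
  proof -
    have "ar f \<noteq> 0"
      using assms(1) by (simp add: plural_type_def not_less_eq_eq[symmetric])
    then have "(Fun f (replicate (ar f) (Var 0)), Var 0) \<in> regular_ids ar"
      by (simp add: regular_ids_def)
    from regular_relI[OF this, of "\<lambda>_. a" B] show ?thesis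
      using a(1) assms(3) by auto
  qed
  ultimately have "(a, ops B f Ds) \<in> \<rho>"
    using equiv by (meson equivE symD transD)
  with a(2) show "ops B f Ds \<in> C"
    by simp
qed

lemma satisfies_absorption_class:
  assumes "t \<in> T ar 2" and "satisfies_prolonged ar t B" and "equiv (carrier B) \<rho>"
    and "\<rho> \<subseteq> regular_rel ar B" and "C \<in> carrier B // \<rho>"
  shows "satisfies (restrict_alg B C) (t, Var 1)"
  unfolding satisfies_def
proof (intro allI impI)
  fix h
  assume "\<forall>y\<in>vars_trm (fst (t, Var 1)) \<union> vars_trm (snd (t, Var 1)). h y \<in> carrier (restrict_alg B C)"
  then have "h 1 \<in> C" "h 2 \<in> C"
    using assms(1) by (simp_all add: T_2_iff restrict_alg_def)
  then have "(h 1, h 2) \<in> regular_rel ar B"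
    using in_quotient_imp_in_rel[OF assms(3,5)] assms(4) by blast
  then have "binary_term_op B t (h 1) (h 2) = h 1"
    by (rule regular_rel_absorb[OF assms(2)])
  moreover have "eval_trm B h t = binary_term_op B t (h 1) (h 2)"
    unfolding binary_term_op_def using assms(1) by (intro eval_trm_cong) (auto simp: T_2_iff)
  ultimately show "eval_trm (restrict_alg B C) h (fst (t, Var 1)) = eval_trm (restrict_alg B C) h (snd (t, Var 1))"
    by (simp add: eval_trm_restrict_alg)
qed

lemma sl_replica_classes:
  assumes "plural_type ar" and "is_alg ar B" and "t \<in> T ar 2" and "satisfies_prolonged ar t B"
    and "sl_replica ar B \<rho>" and "C \<in> carrier B // \<rho>"
  shows "closed_under_ops ar B C \<and> satisfies (restrict_alg B C) (t, Var 1)"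
proof -
  have \<rho>: "\<rho> = regular_rel ar B"
    using assms(2-5) by (rule sl_replica_eq_regular_rel)
  have "congruence ar B \<rho>"
    using assms(5) by (simp add: sl_replica_def)
  then show ?thesis
    using closed_under_ops_quotient_class[OF assms(1)] satisfies_absorption_class[OF assms(3,4)]
      congruence_equiv assms(6) \<rho> by blast
qed

lemma sl_sumI:
  assumes "is_alg ar B" and "sl_replica ar B \<rho>"
    and "\<forall>C\<in>carrier B // \<rho>. closed_under_ops ar B C \<and> (\<forall>e\<in>\<Sigma>. satisfies (restrict_alg B C) e)"
  shows "sl_sum ar \<Sigma> B"
proof -
  have "is_alg ar (restrict_alg B C)" if "closed_under_ops ar B C" for C
    using that by (simp add: is_alg_def closed_under_ops_def restrict_alg_def)
  with assms show ?thesis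
    unfolding sl_sum_def sl_replica_def in_variety_def by blast
qed

lemma satisfies_prolonged_quotient_alg:
  assumes "is_alg ar A" and "congruence ar A \<theta>" and "wf_trm ar t" and "satisfies_prolonged ar t A"
  shows "satisfies_prolonged ar t (quotient_alg A \<theta>)"
  unfolding satisfies_prolonged_def
proof clarify
  fix p q
  assume pq: "(p, q) \<in> regular_ids ar"
  then have "wf_trm ar (subst_trm (\<lambda>i. if i = 1 then p else q) t)" "wf_trm ar p"
    using assms(3) by (auto simp: regular_ids_def intro!: wf_trm_subst_trm)
  moreover have "satisfies A (subst_trm (\<lambda>i. if i = 1 then p else q) t, p)"
    using bspec[OF assms(4)[unfolded satisfies_prolonged_def] pq] by simp
  ultimately show "satisfies (quotient_alg A \<theta>) (subst_trm (\<lambda>i. if i = 1 then p else q) t, p)"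
    using assms(1,2) satisfies_quotient_alg by blast
qed

section \<open>Free algebras\<close>

lemma is_alg_term_alg: "is_alg ar (term_alg ar X)"
  unfolding is_alg_def term_alg_def by auto

lemma congruence_eq_cons:
  "congruence ar (term_alg ar X)
    {(s, u). s \<in> carrier (term_alg ar X) \<and> u \<in> carrier (term_alg ar X) \<and> eq_cons ar \<Sigma> s u}"
  (is "congruence ar ?T ?E")
proof -
  have "equiv (carrier ?T) ?E"
  proof (rule equivI)
    show "?E \<subseteq> carrier ?T \<times> carrier ?T"
      by auto
    show "refl_on (carrier ?T) ?E"
      by (rule refl_onI) (auto simp: term_alg_def intro: eq_cons.refl)
    show "sym ?E"
      by (rule symI) (simp add: eq_cons.sym)
    show "trans ?E"
      by (rule transI) (use eq_cons.trans in blast)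
  qed
  moreover have "(ops ?T f as, ops ?T f bs) \<in> ?E"
    if "length as = ar f" "length bs = ar f" "set as \<subseteq> carrier ?T" "set bs \<subseteq> carrier ?T"
      and "list_all2 (\<lambda>a b. (a, b) \<in> ?E) as bs" for f as bs
  proof -
    have "list_all2 (eq_cons ar \<Sigma>) as bs"
      using that(5) by (rule list_all2_mono) simp
    then have "eq_cons ar \<Sigma> (Fun f as) (Fun f bs)"
      using that(1) by (rule eq_cons.cong[rotated])
    with that(1-4) show ?thesis
      by (auto simp: term_alg_def)
  qed
  ultimately show ?thesis
    unfolding congruence_def by blast
qed

lemma is_alg_free_alg: "is_alg ar (free_alg ar \<Sigma> X)"
  unfolding free_alg_def using is_alg_term_alg congruence_eq_cons by (rule is_alg_quotient_alg)

lemma free_alg_satisfies: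
  assumes "(u, v) \<in> \<Sigma>" and "wf_trm ar u" and "wf_trm ar v"
  shows "satisfies (free_alg ar \<Sigma> X) (u, v)"
  unfolding satisfies_def
proof (intro allI impI)
  let ?T = "term_alg ar X"
  let ?E = "{(s, u). s \<in> carrier ?T \<and> u \<in> carrier ?T \<and> eq_cons ar \<Sigma> s u}"
  let ?V = "vars_trm u \<union> vars_trm v"
  fix g
  assume "\<forall>y\<in>vars_trm (fst (u, v)) \<union> vars_trm (snd (u, v)). g y \<in> carrier (free_alg ar \<Sigma> X)"
  then have "\<forall>y\<in>?V. g y \<in> carrier ?T // ?E"
    by (simp add: free_alg_def quotient_alg_def)
  then obtain h where h: "\<forall>y\<in>?V. h y \<in> carrier ?T" and g: "\<forall>y\<in>?V. g y = ?E `` {h y}"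
    using quotient_assignment_lift[OF congruence_equiv[OF congruence_eq_cons]] by blast
  \<comment> \<open>Extend h to all variables by well-formed terms, as the rule of substitution requires.\<close>
  define h' where "h' y = (if y \<in> ?V then h y else Var undefined)" for y
  have "eq_cons ar \<Sigma> (subst_trm h' u) (subst_trm h' v)"
    using assms(1) h by (intro eq_cons.ax) (auto simp: h'_def term_alg_def)
  moreover have "subst_trm h' u = eval_trm ?T h u" "subst_trm h' v = eval_trm ?T h v"
    by (auto simp: eval_trm_term_alg h'_def intro!: subst_trm_cong)
  moreover have "eval_trm ?T h u \<in> carrier ?T" "eval_trm ?T h v \<in> carrier ?T"
    using assms(2,3) h by (auto intro!: eval_trm_closed[OF is_alg_term_alg])
  ultimately have "?E `` {eval_trm ?T h u} = ?E `` {eval_trm ?T h v}"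
    using congruence_equiv[OF congruence_eq_cons] by (intro equiv_class_eq) auto
  moreover have "eval_trm (free_alg ar \<Sigma> X) g u = ?E `` {eval_trm ?T h u}"
    unfolding free_alg_def using h g
    by (intro eval_trm_quotient_alg[OF congruence_eq_cons is_alg_term_alg assms(2)]) auto
  moreover have "eval_trm (free_alg ar \<Sigma> X) g v = ?E `` {eval_trm ?T h v}"
    unfolding free_alg_def using h g
    by (intro eval_trm_quotient_alg[OF congruence_eq_cons is_alg_term_alg assms(3)]) auto
  ultimately show "eval_trm (free_alg ar \<Sigma> X) g (fst (u, v)) = eval_trm (free_alg ar \<Sigma> X) g (snd (u, v))"
    by simp
qed

lemma in_Id_of:
  assumes "(u, v) \<in> \<Sigma>" and "wf_trm ar u" and "wf_trm ar v"
  shows "(u, v) \<in> Id_of ar \<Sigma>"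
proof -
  have "eq_cons ar \<Sigma> (subst_trm Var u) (subst_trm Var v)"
    using assms(1) by (rule eq_cons.ax) simp
  with assms(2,3) show ?thesis
    by (simp add: Id_of_def subst_trm_Var)
qed

lemma satisfies_prolonged_free_alg:
  assumes "plural_type ar" and "t \<in> T ar 2"
  shows "satisfies_prolonged ar t (free_alg ar (prolong ar (Id_of ar {(t, Var 1)})) X)"
  unfolding satisfies_prolonged_def
proof clarify
  fix p q
  assume pq: "(p, q) \<in> regular_ids ar"
  let ?A = "free_alg ar (prolong ar (Id_of ar {(t, Var 1)})) X"
  let ?\<sigma> = "\<lambda>i::nat. if i = 1 then p else q"
  have t: "wf_trm ar t" "vars_trm t = {1, 2}"
    using assms(2) by (simp_all add: T_2_iff)
  have "\<forall>y\<in>{1, 2}. wf_trm ar (?\<sigma> y) \<and> vars_trm (?\<sigma> y) = vars_trm p"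
    using pq by (simp add: regular_ids_def)
  \<comment> \<open>Renaming the variables of p and q to 1, ..., card (vars p) turns (t(p, q), p) into an
    identity of the prolongation.\<close>
  then obtain r \<tau> where r: "\<forall>y\<in>{1, 2}. r y \<in> T ar (card (vars_trm p))"
    and \<tau>: "\<forall>y\<in>{1, 2}. subst_trm \<tau> (r y) = ?\<sigma> y" "\<forall>x. wf_trm ar (\<tau> x)"
    by (rule rename_into_T[OF finite_vars_trm])
  have "wf_trm ar p"
    using pq by (simp add: regular_ids_def)
  then have "card (vars_trm p) \<ge> 1"
    using vars_trm_nonempty[OF assms(1)] finite_vars_trm[of p] by (simp add: card_gt_0_iff Suc_le_eq)
  moreover have "(subst_trm r t, subst_trm r (Var 1)) \<in> prolong_m ar (card (vars_trm p)) (t, Var 1)"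
    unfolding prolong_m_def using r t(2) by (intro CollectI exI[of _ r]) simp
  moreover have "(t, Var 1) \<in> Id_of ar {(t, Var 1)}"
    using t(1) by (intro in_Id_of) simp_all
  ultimately have "(subst_trm r t, subst_trm r (Var 1)) \<in> prolong ar (Id_of ar {(t, Var 1)})"
    unfolding prolong_def by (intro UN_I[of "(t, Var 1)"] UN_I[of "card (vars_trm p)"]) simp_all
  moreover have "wf_trm ar (subst_trm r t)" "wf_trm ar (subst_trm r (Var 1))"
    using r t by (simp_all add: T_def wf_trm_subst_trm)
  ultimately have "satisfies ?A (subst_trm r t, subst_trm r (Var 1))"
    by (rule free_alg_satisfies)
  then have "satisfies ?A (subst_trm \<tau> (subst_trm r t), subst_trm \<tau> (subst_trm r (Var 1)))"
    by (rule satisfies_subst_trm[OF is_alg_free_alg]) (simp add: \<tau>(2))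
  moreover have "subst_trm \<tau> (subst_trm r t) = subst_trm ?\<sigma> t"
    unfolding subst_trm_subst_trm using \<tau>(1) t(2) by (intro subst_trm_cong) auto
  ultimately show "satisfies ?A (subst_trm ?\<sigma> t, p)"
    using \<tau>(1) by simp
qed

theorem proposition4p8:
  fixes ar :: "'f \<Rightarrow> nat" and t :: "('f, nat) trm" and X :: "'x set"
    and A :: "('f, ('f, 'x) trm set) alg"
    and \<rho> \<theta> \<psi> :: "('f, 'x) trm set rel"
  assumes "plural_type ar"
    and "t \<in> T ar 2"
    and "A = free_alg ar (prolong ar (Id_of ar {(t, Var 1)})) X"
    and "sl_replica ar A \<rho>"
    and "congruence ar A \<theta>"
    and "\<psi> = cong_join ar A \<theta> \<rho>"
  shows "sl_sum ar {(t, Var 1)} (quotient_alg A \<theta>)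
    \<and> sl_replica ar (quotient_alg A \<theta>) (cong_quot \<theta> \<psi>)
    \<and> (\<forall>a \<in> carrier A.
         closed_under_ops ar (quotient_alg A \<theta>) (cong_quot \<theta> \<psi> `` {\<theta> `` {a}})
       \<and> satisfies (restrict_alg (quotient_alg A \<theta>) (cong_quot \<theta> \<psi> `` {\<theta> `` {a}})) (t, Var 1))"
proof -
  let ?B = "quotient_alg A \<theta>"
  have A: "is_alg ar A" "satisfies_prolonged ar t A"
    using is_alg_free_alg satisfies_prolonged_free_alg[OF assms(1,2)] assms(3) by simp_all
  have B: "is_alg ar ?B" "satisfies_prolonged ar t ?B"
    using is_alg_quotient_alg[OF A(1) assms(5)] satisfies_prolonged_quotient_alg[OF A(1) assms(5) _ A(2)]
      assms(2) by (simp_all add: T_2_iff)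
  have replica: "sl_replica ar ?B (cong_quot \<theta> \<psi>)"
    using sl_replica_quotient_alg[OF A(1) assms(5,4)] assms(6) by simp
  have classes: "\<forall>C\<in>carrier ?B // cong_quot \<theta> \<psi>.
      closed_under_ops ar ?B C \<and> satisfies (restrict_alg ?B C) (t, Var 1)"
    using sl_replica_classes[OF assms(1) B(1) assms(2) B(2) replica] by blast
  then have "sl_sum ar {(t, Var 1)} ?B"
    using sl_sumI[OF B(1) replica] by simp
  moreover have "cong_quot \<theta> \<psi> `` {\<theta> `` {a}} \<in> carrier ?B // cong_quot \<theta> \<psi>" if "a \<in> carrier A" for a
    using that by (simp add: quotient_alg_def quotientI)
  ultimately show ?thesis
    using replica classes by blast
qed

end
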